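(* Let $w,z,f,D,r$ and $S_a$ be as in the context, and let $d\sigma_0$ be the area element of $S_a$ induced by the Euclidean metric. Then there is a constant $C$ independent of $a\ge1$ such that $$\int_{S_a}\frac{f a}{D r^4}\,d\sigma_0\le \frac{C}{a}\qquad\text{and}\qquad \int_{S_a}\frac{f^2a^2w}{D^3r^5}\,d\sigma_0\le\frac{C}{a},$$ where $f=f(a)$ and $w=w(t)$ at the point of parameter $t$.
   Context: Let $l>0$ and $w,z:[0,l]\to\mathbb{R}$ be smooth with the surface of revolution $(w\cos\theta,w\sin\theta,z)$ a smooth closed convex surface diffeomorphic to $\mathbb{S}^2$ with positive Gaussian curvature, $C_1^2\le w^2+z^2\le C_2^2$ ($C_1,C_2>0$), $w'^2+z'^2=1$, $w>0$ on $(0,l)$, $w(0)=w(l)=0$, $z'(0)=z'(l)=0$ ($w$ odd and $z$ even across the endpoints), $z(0)>z(l)$. Let $f(a)\ge1$ for $a\ge1$, $h=f(a)z$, $D=\sqrt{w'^2+f^2z'^2}$, $S_a$ the surface $(aw(t)\cos\theta, aw(t)\sin\theta, ah(t))$, and $r=a\sqrt{w^2+h^2}$ the Euclidean distance to the origin on $S_a$. Note $d\sigma_0=a^2Dw\,dt\,d\theta$. *)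

theory Defs
  imports "HOL-Analysis.Analysis"
begin

definition smooth_fun :: "(real \<Rightarrow> real) \<Rightarrow> bool" where
  "smooth_fun g \<longleftrightarrow> (\<forall>n x. ((deriv ^^ n) g) differentiable (at x))"

(* Gaussian curvature of the surface of revolution (w cos th, w sin th, z) at parameter t
   (valid where w t > 0) *)
definition gauss_curv :: "(real \<Rightarrow> real) \<Rightarrow> (real \<Rightarrow> real) \<Rightarrow> real \<Rightarrow> real" where
  "gauss_curv w z t =
     deriv z t * (deriv w t * deriv (deriv z) t - deriv (deriv w) t * deriv z t)
     / (w t * ((deriv w t)\<^sup>2 + (deriv z t)\<^sup>2)\<^sup>2)"

definition D_fun :: "(real \<Rightarrow> real) \<Rightarrow> (real \<Rightarrow> real) \<Rightarrow> real \<Rightarrow> real \<Rightarrow> real" where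
  "D_fun w z fa t = sqrt ((deriv w t)\<^sup>2 + fa\<^sup>2 * (deriv z t)\<^sup>2)"

definition r_fun :: "(real \<Rightarrow> real) \<Rightarrow> (real \<Rightarrow> real) \<Rightarrow> real \<Rightarrow> real \<Rightarrow> real \<Rightarrow> real" where
  "r_fun w z fa a t = a * sqrt ((w t)\<^sup>2 + (fa * z t)\<^sup>2)"

(* integral over S_a of g(t,theta) with respect to the Euclidean area element
   d sigma_0 = a^2 D w dt dtheta, in the parametrization (a w cos th, a w sin th, a f(a) z) *)
definition surf_int_Sa ::
  "(real \<Rightarrow> real) \<Rightarrow> (real \<Rightarrow> real) \<Rightarrow> real \<Rightarrow> real \<Rightarrow> real \<Rightarrow> (real \<Rightarrow> real \<Rightarrow> real) \<Rightarrow> real" where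
  "surf_int_Sa w z l fa a g =
     integral {0..l} (\<lambda>t. integral {0..2*pi} (\<lambda>\<theta>. g t \<theta> * a\<^sup>2 * D_fun w z fa t * w t))"

end

theory Submission
  imports Defs
begin

text \<open>Integrating out \<open>\<theta>\<close> turns both integrals into \<open>2\<pi>/a\<close> times integrals over \<open>[0, l]\<close> that
  are bounded independently of \<open>f \<ge> 1\<close>. The second integrand is bounded pointwise. So is the first
  one away from the plane \<open>z = 0\<close>. Near that plane \<open>w\<close> is bounded below, and since positive curvature
  (whose formula carries a factor \<open>z'\<close>) together with \<open>z(0) > z(l)\<close> forces \<open>z' < 0\<close>, also \<open>-z'\<close>
  is bounded below by compactness; so the integrand is dominated by a multiple of
  \<open>-f z' / (1 + f\<^sup>2 z\<^sup>2) = -(arctan (f z))'\<close>, whose integral is at most \<open>\<pi>\<close>.\<close>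

lemma smooth_fun_deriv: "smooth_fun g \<Longrightarrow> smooth_fun (deriv g)"
  unfolding smooth_fun_def by (metis funpow_Suc_right o_apply)

lemma smooth_fun_differentiable: "smooth_fun g \<Longrightarrow> g differentiable (at x)"
  unfolding smooth_fun_def by (metis funpow_0)

lemma continuous_on_smooth_fun: "smooth_fun g \<Longrightarrow> continuous_on S g"
  by (intro continuous_at_imp_continuous_on ballI differentiable_imp_continuous_within
      smooth_fun_differentiable)

lemma deriv_neg_if_nonvanishing:
  fixes g :: "real \<Rightarrow> real"
  assumes "a < b" and diff: "\<And>x. g differentiable (at x)"
    and cont: "continuous_on {a<..<b} (deriv g)"
    and nonzero: "\<And>x. x \<in> {a<..<b} \<Longrightarrow> deriv g x \<noteq> 0"
    and "g b < g a" and t: "t \<in> {a<..<b}"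
  shows "deriv g t < 0"
proof (rule ccontr)
  assume "\<not> deriv g t < 0"
  with nonzero t have pos: "0 < deriv g t" by force
  obtain L \<xi> where \<xi>: "a < \<xi>" "\<xi> < b" "(g has_real_derivative L) (at \<xi>)" "g b - g a = (b - a) * L"
    using MVT[OF \<open>a < b\<close>] diff
    by (metis continuous_at_imp_continuous_on differentiable_imp_continuous_within)
  have "(b - a) * L < 0"
    using \<xi>(4) \<open>g b < g a\<close> by linarith
  with \<open>a < b\<close> have "deriv g \<xi> < 0"
    using DERIV_imp_deriv[OF \<xi>(3)] by (simp add: mult_less_0_iff)
  moreover have "connected (deriv g ` {a<..<b})"
    by (rule connected_continuous_image[OF cont]) simp
  ultimately have "0 \<in> deriv g ` {a<..<b}"
    using pos t \<xi> unfolding connected_iff_interval by (metis greaterThanLessThan_iff image_eqI less_eq_real_def)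
  with nonzero show False by force
qed

lemma deriv_neg_if_gauss_curv_pos:
  fixes w z :: "real \<Rightarrow> real"
  assumes "a < b" "\<And>x. z differentiable (at x)" "continuous_on {a<..<b} (deriv z)"
    and curv: "\<And>x. x \<in> {a<..<b} \<Longrightarrow> 0 < gauss_curv w z x"
    and "z b < z a" "t \<in> {a<..<b}"
  shows "deriv z t < 0"
proof (rule deriv_neg_if_nonvanishing[OF assms(1-3) _ assms(5,6)])
  show "deriv z x \<noteq> 0" if "x \<in> {a<..<b}" for x
    using curv[OF that] by (auto simp: gauss_curv_def)
qed

lemma half_less_abs_if_other_small:
  fixes x y C :: real
  assumes "0 < C" "C\<^sup>2 \<le> x\<^sup>2 + y\<^sup>2" "\<bar>y\<bar> \<le> C / 2"
  shows "C / 2 < \<bar>x\<bar>"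
proof -
  have "y\<^sup>2 \<le> (C / 2)\<^sup>2"
    using assms abs_le_square_iff[of y "C / 2"] by simp
  then have "(C / 2)\<^sup>2 < x\<^sup>2"
    using assms by (simp add: power_divide) (smt (verit) zero_less_power)
  then show ?thesis
    using assms abs_le_square_iff[of x "C / 2"] by (auto simp: not_le[symmetric])
qed

lemma abs_le_if_sum_squares_le:
  fixes x y C :: real
  assumes "0 \<le> C" "x\<^sup>2 + y\<^sup>2 \<le> C\<^sup>2"
  shows "\<bar>x\<bar> \<le> C"
  using assms abs_le_square_iff[of x C] by (smt (verit) zero_le_power2)

lemma compact_pos_lower_bound:
  fixes h :: "'a::topological_space \<Rightarrow> real"
  assumes "compact K" "continuous_on K h" "\<And>x. x \<in> K \<Longrightarrow> 0 < h x"
  obtains \<mu> where "0 < \<mu>" "\<And>x. x \<in> K \<Longrightarrow> \<mu> \<le> h x"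
proof (cases "K = {}")
  case False
  with assms obtain x0 where "x0 \<in> K" "\<forall>x\<in>K. h x0 \<le> h x"
    using continuous_attains_inf by blast
  with assms that show ?thesis by blast
next
  case True
  then show ?thesis
    using that[of 1] by simp
qed

lemma surf_int_Sa_theta_independent:
  "surf_int_Sa w z l F a (\<lambda>t \<theta>. g t)
     = 2 * pi * integral {0..l} (\<lambda>t. g t * a\<^sup>2 * D_fun w z F t * w t)"
proof -
  have "integral {0..2 * pi} (\<lambda>\<theta>. g t * a\<^sup>2 * D_fun w z F t * w t)
      = 2 * pi * (g t * a\<^sup>2 * D_fun w z F t * w t)" for t
    by simp
  then show ?thesis
    unfolding surf_int_Sa_def by (simp only: integral_mult_right)
qed

lemma arctan_comp_has_integral:
  fixes g :: "real \<Rightarrow> real"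
  assumes "a \<le> b" and diff: "\<And>t. g differentiable (at t)"
  shows "((\<lambda>t. F * deriv g t / (1 + (F * g t)\<^sup>2)) has_integral
           arctan (F * g b) - arctan (F * g a)) {a..b}"
proof (rule fundamental_theorem_of_calculus[OF \<open>a \<le> b\<close>])
  fix t
  have "(g has_real_derivative deriv g t) (at t)"
    using diff DERIV_deriv_iff_real_differentiable by blast
  then have "((\<lambda>t. arctan (F * g t)) has_real_derivative F * deriv g t / (1 + (F * g t)\<^sup>2)) (at t)"
    by (auto intro!: derivative_eq_intros simp: field_simps power_mult_distrib)
  then show "((\<lambda>t. arctan (F * g t)) has_vector_derivative F * deriv g t / (1 + (F * g t)\<^sup>2))
      (at t within {a..b})"
    by (simp add: has_real_derivative_iff_has_vector_derivative has_vector_derivative_at_within)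
qed

lemma first_integrand_le_far_from_equator:
  fixes F w z d M :: real
  assumes "1 \<le> F" "0 < d" "d < \<bar>z\<bar>" "w \<le> M" "0 \<le> M"
  shows "F * w / (w\<^sup>2 + (F * z)\<^sup>2)\<^sup>2 \<le> M / d ^ 4"
proof -
  have "(F * d)\<^sup>2 \<le> (F * z)\<^sup>2"
    using assms abs_le_square_iff[of "F * d" "F * z"] by (auto simp: abs_mult)
  then have "(F * d)\<^sup>2 \<le> w\<^sup>2 + (F * z)\<^sup>2"
    by (smt (verit) zero_le_power2)
  then have "((F * d)\<^sup>2)\<^sup>2 \<le> (w\<^sup>2 + (F * z)\<^sup>2)\<^sup>2"
    by (intro power_mono) auto
  moreover have "F * d ^ 4 \<le> ((F * d)\<^sup>2)\<^sup>2"
    using power_increasing[of 1 4 F] assms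
    by (simp add: power_mult_distrib flip: power_mult)
  ultimately have den: "F * d ^ 4 \<le> (w\<^sup>2 + (F * z)\<^sup>2)\<^sup>2"
    by linarith
  have "F * w / (w\<^sup>2 + (F * z)\<^sup>2)\<^sup>2 \<le> F * M / (w\<^sup>2 + (F * z)\<^sup>2)\<^sup>2"
    using assms by (intro divide_right_mono) auto
  also have "\<dots> \<le> F * M / (F * d ^ 4)"
    using den assms by (intro divide_left_mono mult_pos_pos) auto
  finally show ?thesis
    using assms by simp
qed

lemma first_integrand_le_near_equator:
  fixes F w z z' e \<mu> M :: real
  assumes "1 \<le> F" "0 < e" "e \<le> 1" "e \<le> w\<^sup>2" "w \<le> M" "0 \<le> M" "0 < \<mu>" "\<mu> \<le> - z'"
  shows "F * w / (w\<^sup>2 + (F * z)\<^sup>2)\<^sup>2 \<le> M / (e\<^sup>2 * \<mu>) * (F * - z' / (1 + (F * z)\<^sup>2))"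
proof -
  define Q where "Q = 1 + (F * z)\<^sup>2"
  have "1 \<le> Q"
    by (simp add: Q_def)
  have "e * Q \<le> w\<^sup>2 + (F * z)\<^sup>2"
    using assms mult_left_le_one_le[of "(F * z)\<^sup>2" e] by (simp add: Q_def distrib_left)
  then have "(e * Q)\<^sup>2 \<le> (w\<^sup>2 + (F * z)\<^sup>2)\<^sup>2"
    using assms \<open>1 \<le> Q\<close> by (intro power_mono) auto
  moreover have "e\<^sup>2 * Q \<le> (e * Q)\<^sup>2"
    using assms \<open>1 \<le> Q\<close> by (simp add: power2_eq_square)
  ultimately have den: "e\<^sup>2 * Q \<le> (w\<^sup>2 + (F * z)\<^sup>2)\<^sup>2"
    by linarith
  have "F * w / (w\<^sup>2 + (F * z)\<^sup>2)\<^sup>2 \<le> F * M / (w\<^sup>2 + (F * z)\<^sup>2)\<^sup>2"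
    using assms by (intro divide_right_mono) auto
  also have "\<dots> \<le> F * M / (e\<^sup>2 * Q)"
    using den assms \<open>1 \<le> Q\<close> by (intro divide_left_mono mult_pos_pos) auto
  also have "\<dots> = M / (e\<^sup>2 * \<mu>) * (F * \<mu> / Q)"
    using assms \<open>1 \<le> Q\<close> by (simp add: field_simps)
  also have "\<dots> \<le> M / (e\<^sup>2 * \<mu>) * (F * - z' / Q)"
    using assms \<open>1 \<le> Q\<close> by (intro mult_left_mono divide_right_mono) auto
  finally show ?thesis
    by (simp add: Q_def)
qed

lemma second_integrand_le_far_from_equator:
  fixes F w z d M D :: real
  assumes "1 \<le> F" "0 < d" "d < \<bar>z\<bar>" "\<bar>w\<bar> \<le> M" "1 \<le> D\<^sup>2"
  shows "F\<^sup>2 * w\<^sup>2 / (D\<^sup>2 * sqrt (w\<^sup>2 + (F * z)\<^sup>2) ^ 5) \<le> M\<^sup>2 / d ^ 5"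
proof -
  have "F * d \<le> sqrt ((F * z)\<^sup>2)"
    using assms by (simp add: abs_mult)
  also have "\<dots> \<le> sqrt (w\<^sup>2 + (F * z)\<^sup>2)"
    by simp
  finally have "(F * d) ^ 5 \<le> sqrt (w\<^sup>2 + (F * z)\<^sup>2) ^ 5"
    using assms by (intro power_mono) auto
  moreover have "F\<^sup>2 * d ^ 5 \<le> (F * d) ^ 5"
    using power_increasing[of 2 5 F] assms by (simp add: power_mult_distrib)
  moreover have "sqrt (w\<^sup>2 + (F * z)\<^sup>2) ^ 5 \<le> D\<^sup>2 * sqrt (w\<^sup>2 + (F * z)\<^sup>2) ^ 5"
    using assms mult_right_mono[of 1 "D\<^sup>2" "sqrt (w\<^sup>2 + (F * z)\<^sup>2) ^ 5"] by simp
  ultimately have den: "F\<^sup>2 * d ^ 5 \<le> D\<^sup>2 * sqrt (w\<^sup>2 + (F * z)\<^sup>2) ^ 5"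
    by linarith
  have "w\<^sup>2 \<le> M\<^sup>2"
    using assms abs_le_square_iff[of w M] by auto
  then have "F\<^sup>2 * w\<^sup>2 / (D\<^sup>2 * sqrt (w\<^sup>2 + (F * z)\<^sup>2) ^ 5) \<le> F\<^sup>2 * M\<^sup>2 / (F\<^sup>2 * d ^ 5)"
    using den assms by (intro frac_le mult_left_mono) auto
  then show ?thesis
    using assms by simp
qed

lemma second_integrand_le_near_equator:
  fixes F w z d M D \<mu> :: real
  assumes "1 \<le> F" "0 < d" "d \<le> \<bar>w\<bar>" "\<bar>w\<bar> \<le> M" "0 < \<mu>" "F\<^sup>2 * \<mu>\<^sup>2 \<le> D\<^sup>2"
  shows "F\<^sup>2 * w\<^sup>2 / (D\<^sup>2 * sqrt (w\<^sup>2 + (F * z)\<^sup>2) ^ 5) \<le> M\<^sup>2 / (\<mu>\<^sup>2 * d ^ 5)"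
proof -
  have "d \<le> sqrt (w\<^sup>2)"
    using assms by simp
  also have "\<dots> \<le> sqrt (w\<^sup>2 + (F * z)\<^sup>2)"
    by simp
  finally have "F\<^sup>2 * \<mu>\<^sup>2 * d ^ 5 \<le> D\<^sup>2 * sqrt (w\<^sup>2 + (F * z)\<^sup>2) ^ 5"
    using assms by (intro mult_mono power_mono) auto
  moreover have "w\<^sup>2 \<le> M\<^sup>2"
    using assms abs_le_square_iff[of w M] by auto
  ultimately have "F\<^sup>2 * w\<^sup>2 / (D\<^sup>2 * sqrt (w\<^sup>2 + (F * z)\<^sup>2) ^ 5) \<le> F\<^sup>2 * M\<^sup>2 / (F\<^sup>2 * \<mu>\<^sup>2 * d ^ 5)"
    using assms by (intro frac_le mult_left_mono) auto
  then show ?thesis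
    using assms by simp
qed

lemma neg_deriv_lower_bound_where_small:
  fixes z :: "real \<Rightarrow> real"
  assumes "continuous_on {a..b} z" "continuous_on {a..b} (deriv z)"
    and "d < \<bar>z a\<bar>" "d < \<bar>z b\<bar>" and neg: "\<And>t. t \<in> {a<..<b} \<Longrightarrow> deriv z t < 0"
  obtains \<mu> where "0 < \<mu>" "\<And>t. t \<in> {a..b} \<Longrightarrow> \<bar>z t\<bar> \<le> d \<Longrightarrow> \<mu> \<le> - deriv z t"
proof -
  define K where "K = {a..b} \<inter> z -` {-d..d}"
  have "compact K"
    unfolding compact_eq_bounded_closed K_def
    by (intro conjI bounded_Int continuous_closed_preimage assms(1)) auto
  moreover have "continuous_on K (\<lambda>t. - deriv z t)"
    unfolding K_def by (intro continuous_intros continuous_on_subset[OF assms(2)]) auto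
  moreover have "0 < - deriv z t" if "t \<in> K" for t
  proof -
    have "t \<noteq> a" "t \<noteq> b"
      using that assms(3,4) by (auto simp: K_def)
    with that show ?thesis
      using neg by (force simp: K_def)
  qed
  ultimately obtain \<mu> where "0 < \<mu>" "\<And>t. t \<in> K \<Longrightarrow> \<mu> \<le> - deriv z t"
    by (rule compact_pos_lower_bound) blast+
  with that show ?thesis
    by (auto simp: K_def abs_le_iff)
qed

lemma D_fun_squared: "(D_fun w z F t)\<^sup>2 = (deriv w t)\<^sup>2 + F\<^sup>2 * (deriv z t)\<^sup>2"
  by (simp add: D_fun_def)

locale decreasing_profile =
  fixes w z :: "real \<Rightarrow> real" and l d \<mu> M :: real
  assumes l_pos: "0 < l" and d_pos: "0 < d" and \<mu>_pos: "0 < \<mu>"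
    and w_differentiable: "\<And>t. w differentiable (at t)"
    and z_differentiable: "\<And>t. z differentiable (at t)"
    and deriv_w_continuous: "continuous_on {0..l} (deriv w)"
    and deriv_z_continuous: "continuous_on {0..l} (deriv z)"
    and unit_speed: "\<And>t. t \<in> {0..l} \<Longrightarrow> (deriv w t)\<^sup>2 + (deriv z t)\<^sup>2 = 1"
    and abs_w_le: "\<And>t. t \<in> {0..l} \<Longrightarrow> \<bar>w t\<bar> \<le> M"
    and deriv_z_nonpos: "\<And>t. t \<in> {0..l} \<Longrightarrow> deriv z t \<le> 0"
    and steep_near_equator: "\<And>t. t \<in> {0..l} \<Longrightarrow> \<bar>z t\<bar> \<le> d \<Longrightarrow> d \<le> \<bar>w t\<bar> \<and> \<mu> \<le> - deriv z t"
begin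

lemma M_nonneg: "0 \<le> M"
  using abs_w_le[of 0] l_pos by force

lemma continuous_on_w: "continuous_on S w"
  by (intro continuous_at_imp_continuous_on ballI differentiable_imp_continuous_within w_differentiable)

lemma continuous_on_z: "continuous_on S z"
  by (intro continuous_at_imp_continuous_on ballI differentiable_imp_continuous_within z_differentiable)

lemma radius_squared_pos:
  assumes "1 \<le> F" "t \<in> {0..l}"
  shows "0 < (w t)\<^sup>2 + (F * z t)\<^sup>2"
proof (cases "\<bar>z t\<bar> \<le> d")
  case True
  then have "w t \<noteq> 0"
    using steep_near_equator[OF assms(2)] d_pos by auto
  then show ?thesis
    by (simp add: add_pos_nonneg)
next
  case False
  then have "F * z t \<noteq> 0"
    using assms d_pos by auto
  then show ?thesis
    by (simp add: add_nonneg_pos)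
qed

lemma one_le_D_fun_squared:
  assumes "1 \<le> F" "t \<in> {0..l}"
  shows "1 \<le> (D_fun w z F t)\<^sup>2"
proof -
  have "(deriv z t)\<^sup>2 \<le> F\<^sup>2 * (deriv z t)\<^sup>2"
    using assms by (simp add: mult_le_cancel_right1 one_le_power)
  then show ?thesis
    using unit_speed[OF assms(2)] by (simp add: D_fun_squared)
qed

lemma first_integral_le:
  assumes "1 \<le> F" "0 < a"
  shows "surf_int_Sa w z l F a (\<lambda>t \<theta>. F * a / (D_fun w z F t * r_fun w z F a t ^ 4))
           \<le> 2 * pi * (M / d ^ 4 * l + M / ((min (d\<^sup>2) 1)\<^sup>2 * \<mu>) * pi) / a"
proof -
  define P where "P t = (w t)\<^sup>2 + (F * z t)\<^sup>2" for t
  define e where "e = min (d\<^sup>2) 1"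
  define B where "B = M / (e\<^sup>2 * \<mu>)"
  define g where "g t = F * - deriv z t / (1 + (F * z t)\<^sup>2)" for t
  have "(g has_integral arctan (F * z 0) - arctan (F * z l)) {0..l}"
    using has_integral_neg[OF arctan_comp_has_integral[of 0 l z F]] l_pos z_differentiable
    by (simp add: g_def[abs_def])
  then have bound_integral:
    "((\<lambda>t. M / d ^ 4 + B * g t) has_integral M / d ^ 4 * l + B * (arctan (F * z 0) - arctan (F * z l))) {0..l}"
    using has_integral_const_real[of "M / d ^ 4" 0 l] l_pos
    by (auto intro!: has_integral_add has_integral_mult_right simp: mult.commute)
  have "surf_int_Sa w z l F a (\<lambda>t \<theta>. F * a / (D_fun w z F t * r_fun w z F a t ^ 4))
      = 2 * pi * integral {0..l} (\<lambda>t. F * w t / (P t)\<^sup>2 / a)"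
    unfolding surf_int_Sa_theta_independent
  proof (intro arg_cong[where f = "(*) (2 * pi)"] integral_cong)
    fix t assume t: "t \<in> {0..l}"
    have "0 < D_fun w z F t"
      using one_le_D_fun_squared[OF assms(1) t] by (simp add: D_fun_def)
    have "0 < P t"
      using radius_squared_pos[OF assms(1) t] by (simp add: P_def)
    moreover have "sqrt (P t) ^ 4 = (sqrt (P t) ^ 2) ^ 2"
      by (simp flip: power_mult)
    ultimately have "r_fun w z F a t ^ 4 = a ^ 4 * (P t)\<^sup>2"
      by (simp add: r_fun_def P_def power_mult_distrib)
    with \<open>0 < D_fun w z F t\<close> \<open>0 < P t\<close> show "F * a / (D_fun w z F t * r_fun w z F a t ^ 4) * a\<^sup>2 * D_fun w z F t * w t
        = F * w t / (P t)\<^sup>2 / a"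
      using assms by (simp add: field_simps eval_nat_numeral)
  qed
  also have "integral {0..l} (\<lambda>t. F * w t / (P t)\<^sup>2 / a) = integral {0..l} (\<lambda>t. F * w t / (P t)\<^sup>2) / a"
    by (rule integral_divide)
  also have "integral {0..l} (\<lambda>t. F * w t / (P t)\<^sup>2) \<le> M / d ^ 4 * l + B * (arctan (F * z 0) - arctan (F * z l))"
  proof (rule has_integral_le[OF integrable_integral bound_integral])
    show "(\<lambda>t. F * w t / (P t)\<^sup>2) integrable_on {0..l}"
      using radius_squared_pos[OF assms(1)] unfolding P_def
      by (intro integrable_continuous_interval continuous_intros continuous_on_w continuous_on_z) force
    fix t assume t: "t \<in> {0..l}"
    have "w t \<le> M" "0 \<le> B"
      using abs_w_le[OF t] M_nonneg d_pos \<mu>_pos by (auto simp: B_def e_def)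
    have "0 \<le> g t"
      using deriv_z_nonpos[OF t] assms unfolding g_def
      by (intro divide_nonneg_pos mult_nonneg_nonneg) (auto simp: add_pos_nonneg)
    show "F * w t / (P t)\<^sup>2 \<le> M / d ^ 4 + B * g t"
    proof (cases "\<bar>z t\<bar> \<le> d")
      case True
      have "e \<le> (w t)\<^sup>2"
        using steep_near_equator[OF t True] d_pos abs_le_square_iff[of d "w t"] by (auto simp: e_def)
      then have "F * w t / (P t)\<^sup>2 \<le> B * g t"
        unfolding P_def B_def g_def
        using first_integrand_le_near_equator[OF assms(1) _ _ _ \<open>w t \<le> M\<close> M_nonneg \<mu>_pos]
          steep_near_equator[OF t True] d_pos by (simp add: e_def)
      then show ?thesis
        using M_nonneg d_pos by (smt (verit) divide_nonneg_pos zero_less_power)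
    next
      case False
      then have "F * w t / (P t)\<^sup>2 \<le> M / d ^ 4"
        unfolding P_def using first_integrand_le_far_from_equator[OF assms(1) d_pos _ \<open>w t \<le> M\<close> M_nonneg] by simp
      then show ?thesis
        using \<open>0 \<le> B\<close> \<open>0 \<le> g t\<close> by (smt (verit) mult_nonneg_nonneg)
    qed
  qed
  also have "\<dots> \<le> M / d ^ 4 * l + B * pi"
    using arctan_bounded[of "F * z 0"] arctan_bounded[of "F * z l"] M_nonneg d_pos \<mu>_pos
    by (intro add_left_mono mult_left_mono) (auto simp: B_def e_def)
  finally show ?thesis
    using assms by (simp add: B_def e_def divide_right_mono)
qed

lemma second_integral_le:
  assumes "1 \<le> F" "0 < a"
  shows "surf_int_Sa w z l F a
           (\<lambda>t \<theta>. F\<^sup>2 * a\<^sup>2 * w t / ((D_fun w z F t) ^ 3 * (r_fun w z F a t) ^ 5))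
           \<le> 2 * pi * ((M\<^sup>2 / d ^ 5 + M\<^sup>2 / (\<mu>\<^sup>2 * d ^ 5)) * l) / a"
proof -
  define P where "P t = (w t)\<^sup>2 + (F * z t)\<^sup>2" for t
  define K where "K = M\<^sup>2 / d ^ 5 + M\<^sup>2 / (\<mu>\<^sup>2 * d ^ 5)"
  have "surf_int_Sa w z l F a (\<lambda>t \<theta>. F\<^sup>2 * a\<^sup>2 * w t / ((D_fun w z F t) ^ 3 * (r_fun w z F a t) ^ 5))
      = 2 * pi * integral {0..l} (\<lambda>t. F\<^sup>2 * (w t)\<^sup>2 / ((D_fun w z F t)\<^sup>2 * sqrt (P t) ^ 5) / a)"
    unfolding surf_int_Sa_theta_independent
  proof (intro arg_cong[where f = "(*) (2 * pi)"] integral_cong)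
    fix t assume t: "t \<in> {0..l}"
    have "0 < D_fun w z F t"
      using one_le_D_fun_squared[OF assms(1) t] by (simp add: D_fun_def)
    moreover have "0 < P t"
      using radius_squared_pos[OF assms(1) t] by (simp add: P_def)
    moreover have "r_fun w z F a t = a * sqrt (P t)"
      by (simp add: r_fun_def P_def)
    ultimately show "F\<^sup>2 * a\<^sup>2 * w t / ((D_fun w z F t) ^ 3 * (r_fun w z F a t) ^ 5) * a\<^sup>2 * D_fun w z F t * w t
        = F\<^sup>2 * (w t)\<^sup>2 / ((D_fun w z F t)\<^sup>2 * sqrt (P t) ^ 5) / a"
      using assms by (simp add: power_mult_distrib field_simps eval_nat_numeral)
  qed
  also have "\<dots> = 2 * pi * (integral {0..l} (\<lambda>t. F\<^sup>2 * (w t)\<^sup>2 / ((D_fun w z F t)\<^sup>2 * sqrt (P t) ^ 5)) / a)"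
    by (simp only: integral_divide)
  also have "integral {0..l} (\<lambda>t. F\<^sup>2 * (w t)\<^sup>2 / ((D_fun w z F t)\<^sup>2 * sqrt (P t) ^ 5)) \<le> K * l"
  proof (rule has_integral_le[OF integrable_integral])
    show "((\<lambda>t. K) has_integral K * l) {0..l}"
      using has_integral_const_real[of K 0 l] l_pos by (simp add: mult.commute)
    have "(D_fun w z F t)\<^sup>2 * sqrt (P t) ^ 5 \<noteq> 0" if "t \<in> {0..l}" for t
    proof -
      have "0 < sqrt (P t) ^ 5"
        using radius_squared_pos[OF assms(1) that] by (simp add: P_def)
      then show ?thesis
        using one_le_D_fun_squared[OF assms(1) that] by (smt (verit) mult_pos_pos)
    qed
    then show "(\<lambda>t. F\<^sup>2 * (w t)\<^sup>2 / ((D_fun w z F t)\<^sup>2 * sqrt (P t) ^ 5)) integrable_on {0..l}"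
      unfolding P_def D_fun_squared
      by (intro integrable_continuous_interval continuous_intros continuous_on_w continuous_on_z
          deriv_w_continuous deriv_z_continuous) (auto simp: P_def D_fun_squared)
    fix t assume t: "t \<in> {0..l}"
    have nonneg: "0 \<le> M\<^sup>2 / d ^ 5" "0 \<le> M\<^sup>2 / (\<mu>\<^sup>2 * d ^ 5)"
      using d_pos by simp_all
    show "F\<^sup>2 * (w t)\<^sup>2 / ((D_fun w z F t)\<^sup>2 * sqrt (P t) ^ 5) \<le> K"
    proof (cases "\<bar>z t\<bar> \<le> d")
      case True
      have "\<mu>\<^sup>2 \<le> (deriv z t)\<^sup>2"
        using steep_near_equator[OF t True] \<mu>_pos abs_le_square_iff[of \<mu> "deriv z t"] by auto
      then have "F\<^sup>2 * \<mu>\<^sup>2 \<le> (D_fun w z F t)\<^sup>2"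
        unfolding D_fun_squared by (smt (verit) mult_left_mono zero_le_power2)
      then have "F\<^sup>2 * (w t)\<^sup>2 / ((D_fun w z F t)\<^sup>2 * sqrt (P t) ^ 5) \<le> M\<^sup>2 / (\<mu>\<^sup>2 * d ^ 5)"
        unfolding P_def using steep_near_equator[OF t True]
        by (intro second_integrand_le_near_equator[OF assms(1) d_pos _ abs_w_le[OF t] \<mu>_pos]) auto
      then show ?thesis
        using nonneg by (simp add: K_def)
    next
      case False
      then have "F\<^sup>2 * (w t)\<^sup>2 / ((D_fun w z F t)\<^sup>2 * sqrt (P t) ^ 5) \<le> M\<^sup>2 / d ^ 5"
        unfolding P_def using one_le_D_fun_squared[OF assms(1) t]
        by (intro second_integrand_le_far_from_equator[OF assms(1) d_pos _ abs_w_le[OF t]]) auto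
      then show ?thesis
        using nonneg by (simp add: K_def)
    qed
  qed
  finally show ?thesis
    using assms by (simp add: K_def divide_right_mono)
qed

lemma surface_integrals_le:
  "\<exists>C. \<forall>F a. 1 \<le> F \<and> 0 < a \<longrightarrow>
     surf_int_Sa w z l F a (\<lambda>t \<theta>. F * a / (D_fun w z F t * r_fun w z F a t ^ 4)) \<le> C / a \<and>
     surf_int_Sa w z l F a
       (\<lambda>t \<theta>. F\<^sup>2 * a\<^sup>2 * w t / ((D_fun w z F t) ^ 3 * (r_fun w z F a t) ^ 5)) \<le> C / a"
proof -
  define c1 where "c1 = 2 * pi * (M / d ^ 4 * l + M / ((min (d\<^sup>2) 1)\<^sup>2 * \<mu>) * pi)"
  define c2 where "c2 = 2 * pi * ((M\<^sup>2 / d ^ 5 + M\<^sup>2 / (\<mu>\<^sup>2 * d ^ 5)) * l)"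
  have "0 \<le> c1" "0 \<le> c2"
    using M_nonneg d_pos \<mu>_pos l_pos by (simp_all add: c1_def c2_def)
  then have "c1 / a \<le> (c1 + c2) / a" "c2 / a \<le> (c1 + c2) / a" if "0 < a" for a
    using that by (simp_all add: divide_right_mono)
  with first_integral_le second_integral_le show ?thesis
    by (intro exI[of _ "c1 + c2"]) (fastforce simp: c1_def c2_def)
qed

end

theorem mainTheorem7:
  fixes w z f :: "real \<Rightarrow> real" and l C1 C2 :: real
  assumes l_pos: "l > 0"
    and w_smooth: "smooth_fun w" and z_smooth: "smooth_fun z"
    and w_odd0: "\<forall>t. w (- t) = - w t" and w_oddl: "\<forall>t. w (l + t) = - w (l - t)"
    and z_even0: "\<forall>t. z (- t) = z t" and z_evenl: "\<forall>t. z (l + t) = z (l - t)"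
    and arclength: "\<forall>t\<in>{0..l}. (deriv w t)\<^sup>2 + (deriv z t)\<^sup>2 = 1"
    and w_pos: "\<forall>t\<in>{0<..<l}. w t > 0"
    and w_end: "w 0 = 0" "w l = 0"
    and z'_end: "deriv z 0 = 0" "deriv z l = 0"
    and z_ends: "z 0 > z l"
    and C_pos: "C1 > 0" "C2 > 0"
    and bounds: "\<forall>t\<in>{0..l}. C1\<^sup>2 \<le> (w t)\<^sup>2 + (z t)\<^sup>2 \<and> (w t)\<^sup>2 + (z t)\<^sup>2 \<le> C2\<^sup>2"
    and curv_pos: "\<exists>c>0. \<forall>t\<in>{0<..<l}. gauss_curv w z t \<ge> c"
    and f_ge: "\<forall>a\<ge>1. f a \<ge> 1"
  shows "\<exists>C. \<forall>a\<ge>1.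
    surf_int_Sa w z l (f a) a
      (\<lambda>t \<theta>. f a * a / (D_fun w z (f a) t * (r_fun w z (f a) a t)^4)) \<le> C / a
  \<and> surf_int_Sa w z l (f a) a
      (\<lambda>t \<theta>. (f a)\<^sup>2 * a\<^sup>2 * w t / ((D_fun w z (f a) t)^3 * (r_fun w z (f a) a t)^5)) \<le> C / a"
proof -
  have z_diff: "\<And>t. z differentiable (at t)"
    using z_smooth by (simp add: smooth_fun_differentiable)
  have deriv_cont: "continuous_on S (deriv w)" "continuous_on S (deriv z)" for S
    using w_smooth z_smooth by (simp_all add: continuous_on_smooth_fun smooth_fun_deriv)
  have z'_neg: "deriv z t < 0" if "t \<in> {0<..<l}" for t
    using deriv_neg_if_gauss_curv_pos[where w = w, OF l_pos z_diff deriv_cont(2) _ z_ends that] curv_pos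
    by fastforce
  have z'_nonpos: "deriv z t \<le> 0" if "t \<in> {0..l}" for t
    using z'_neg[of t] z'_end that by (cases "t = 0 \<or> t = l") auto
  have "C1 / 2 < \<bar>z 0\<bar>" "C1 / 2 < \<bar>z l\<bar>"
    using half_less_abs_if_other_small[OF C_pos(1)] bounds l_pos w_end by (force simp: add.commute)+
  then obtain \<mu> where \<mu>: "0 < \<mu>" "\<And>t. t \<in> {0..l} \<Longrightarrow> \<bar>z t\<bar> \<le> C1 / 2 \<Longrightarrow> \<mu> \<le> - deriv z t"
    using neg_deriv_lower_bound_where_small[OF continuous_on_smooth_fun[OF z_smooth] deriv_cont(2)]
      z'_neg by blast
  have w_le: "\<bar>w t\<bar> \<le> C2" if "t \<in> {0..l}" for t
    using abs_le_if_sum_squares_le[of C2 "w t" "z t"] bounds that C_pos by simp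
  have w_ge: "C1 / 2 \<le> \<bar>w t\<bar>" if "t \<in> {0..l}" "\<bar>z t\<bar> \<le> C1 / 2" for t
    using half_less_abs_if_other_small[of C1 "w t" "z t"] bounds that C_pos by simp
  interpret decreasing_profile w z l "C1 / 2" \<mu> C2
    using l_pos C_pos \<mu> z_diff deriv_cont arclength z'_nonpos w_le w_ge
      smooth_fun_differentiable[OF w_smooth]
    by unfold_locales simp_all
  show ?thesis
    using surface_integrals_le f_ge by (meson order_less_le_trans zero_less_one)
qed

end
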